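(* The family of induced paw-free graphs is feasible: for every integer $n \geq 1$ and every integer $m$ with $0 \leq m \leq \binom{n}{2}$, there exists a graph with $n$ vertices and $m$ edges containing no induced paw.
   Context: All graphs are finite and simple. The paw is the graph consisting of a triangle $K_3$ together with one additional vertex joined by an edge to exactly one vertex of the triangle. A graph is induced paw-free if it has no induced subgraph isomorphic to the paw. *)

theory Defs
  imports Main
begin

definition simple_graph :: "'a set \<Rightarrow> 'a set set \<Rightarrow> bool" where
  "simple_graph V E \<longleftrightarrow> finite V \<and> (\<forall>e\<in>E. e \<subseteq> V \<and> card e = 2)"

definition has_induced_paw :: "'a set \<Rightarrow> 'a set set \<Rightarrow> bool" where
  "has_induced_paw V E \<longleftrightarrow>
     (\<exists>a\<in>V. \<exists>b\<in>V. \<exists>c\<in>V. \<exists>d\<in>V. distinct [a, b, c, d] \<and>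
        {a, b} \<in> E \<and> {b, c} \<in> E \<and> {a, c} \<in> E \<and> {a, d} \<in> E \<and>
        {b, d} \<notin> E \<and> {c, d} \<notin> E)"

definition paw_free :: "'a set \<Rightarrow> 'a set set \<Rightarrow> bool" where
  "paw_free V E \<longleftrightarrow> \<not> has_induced_paw V E"

end

theory Submission
  imports Defs
begin

text \<open>The graphs constructed are complements, within a set of \<open>k\<close> vertices, of cluster graphs
  (disjoint unions of cliques), padded with isolated vertices. In such a complement non-adjacency
  among the \<open>k\<close> vertices is transitive, whereas the pendant vertex of a paw is non-adjacent to
  both ends of an edge of the triangle; hence these graphs are paw-free. Removing from \<open>K\<^sub>k\<close>
  a clique \<open>K\<^sub>t\<close> and \<open>p\<close> further disjoint edges reaches every edge count \<open>m \<le> n choose 2\<close>: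
  choose the least \<open>k\<close> with \<open>m \<le> k choose 2\<close> and write the deficit \<open>r \<le> k - 2\<close> as
  \<open>(t choose 2) + p\<close> with \<open>p < t\<close>, which leaves room for the \<open>t + 2p\<close> vertices needed.\<close>

lemma choose_two_Suc: "Suc k choose 2 = (k choose 2) + k"
  by (simp add: numeral_2_eq_2)

lemma two_mult_le_choose_two: "2 * t \<le> (t choose 2) + 3"
  by (induction t) (auto simp: choose_two_Suc)

lemma between_triangular_numbers: "\<exists>t p. p < t \<and> r = (t choose 2) + p"
proof (induction r)
  case 0
  show ?case by (rule exI[of _ 1]) simp
next
  case (Suc r)
  then obtain t p where tp: "p < t" "r = (t choose 2) + p" by blast
  show ?case
  proof (cases "Suc p < t")
    case True
    with tp show ?thesis by (intro exI[of _ t] exI[of _ "Suc p"]) simp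
  next
    case False
    with tp show ?thesis by (intro exI[of _ "Suc t"] exI[of _ 0]) (simp add: choose_two_Suc)
  qed
qed

lemma triangular_number_above:
  assumes "0 < m" "m \<le> n choose 2"
  shows "\<exists>k \<le> n. \<exists>r. r + 2 \<le> k \<and> m + r = k choose 2"
proof -
  define k where "k = (LEAST k. m \<le> k choose 2)"
  have "m \<le> k choose 2" "k \<le> n"
    unfolding k_def using assms(2) by (auto intro: LeastI Least_le)
  moreover obtain j where "k = Suc j"
    using \<open>m \<le> k choose 2\<close> assms(1) by (cases k) (auto simp: numeral_2_eq_2)
  moreover have "\<not> m \<le> j choose 2"
    using not_less_Least[of j "\<lambda>k. m \<le> k choose 2"] \<open>k = Suc j\<close> k_def by simp
  ultimately show ?thesis
    by (intro exI[of _ k] conjI exI[of _ "(k choose 2) - m"]) (auto simp: choose_two_Suc)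
qed

lemma edge_count_decomposition:
  assumes "m \<le> n choose 2"
  shows "\<exists>k t p. k \<le> n \<and> t + 2 * p \<le> k \<and> m = (k choose 2) - ((t choose 2) + p)"
proof (cases "m = 0")
  case True
  then show ?thesis by (intro exI[of _ 0]) simp
next
  case False
  then obtain k r where "k \<le> n" "r + 2 \<le> k" "m + r = k choose 2"
    using triangular_number_above assms by blast
  moreover obtain t p where "p < t" "r = (t choose 2) + p"
    using between_triangular_numbers by blast
  moreover have "t + p \<le> (t choose 2) + 2"
    using two_mult_le_choose_two[of t] \<open>p < t\<close> by linarith
  ultimately show ?thesis by (intro exI[of _ k] exI[of _ t] exI[of _ p]) auto
qed

definition all_edges :: "'a set \<Rightarrow> 'a set set" where
  "all_edges S = {e. e \<subseteq> S \<and> card e = 2}"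

lemma card_all_edges: "finite S \<Longrightarrow> card (all_edges S) = card S choose 2"
  unfolding all_edges_def by (rule n_subsets)

lemma finite_all_edges: "finite S \<Longrightarrow> finite (all_edges S)"
  unfolding all_edges_def by (auto intro: finite_subset[of _ "Pow S"])

lemma simple_graph_all_edges_diff: "finite V \<Longrightarrow> U \<subseteq> V \<Longrightarrow> simple_graph V (all_edges U - B)"
  unfolding simple_graph_def all_edges_def by auto

definition cluster_edges :: "'a set set \<Rightarrow> 'a set set" where
  "cluster_edges \<P> = (\<Union>P\<in>\<P>. all_edges P)"

lemma paw_free_complement_cluster:
  assumes "pairwise disjnt \<P>"
  shows "paw_free V (all_edges U - cluster_edges \<P>)" (is "paw_free V ?E")
  unfolding paw_free_def
proof
  assume "has_induced_paw V ?E"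
  then obtain a b c d where paw: "distinct [a, b, c, d]" "{b, c} \<in> ?E" "{a, d} \<in> ?E"
    "{b, d} \<notin> ?E" "{c, d} \<notin> ?E"
    unfolding has_induced_paw_def by blast
  then have "b \<in> U" "c \<in> U" "d \<in> U"
    unfolding all_edges_def by auto
  with paw obtain P Q where "P \<in> \<P>" "{b, d} \<subseteq> P" "Q \<in> \<P>" "{c, d} \<subseteq> Q"
    unfolding all_edges_def cluster_edges_def by auto
  with assms have "P = Q"
    unfolding pairwise_def disjnt_def by blast
  with paw \<open>P \<in> \<P>\<close> \<open>{b, d} \<subseteq> P\<close> \<open>{c, d} \<subseteq> Q\<close> show False
    unfolding all_edges_def cluster_edges_def by auto
qed

lemma card_cluster_edges:
  assumes "finite \<P>" "\<forall>P\<in>\<P>. finite P" "pairwise disjnt \<P>"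
  shows "card (cluster_edges \<P>) = (\<Sum>P\<in>\<P>. card P choose 2)"
proof -
  have "all_edges P \<inter> all_edges Q = {}" if "P \<in> \<P>" "Q \<in> \<P>" "P \<noteq> Q" for P Q
  proof -
    have "disjnt P Q"
      using assms(3) that by (rule pairwiseD)
    then have "card e \<noteq> 2" if "e \<subseteq> P" "e \<subseteq> Q" for e
      using that unfolding disjnt_def by (metis Int_greatest card.empty subset_empty zero_neq_numeral)
    then show ?thesis
      unfolding all_edges_def by blast
  qed
  then show ?thesis
    unfolding cluster_edges_def
    using assms by (simp add: card_UN_disjoint finite_all_edges card_all_edges)
qed

lemma card_complement_cluster:
  assumes "finite U" "\<Union>\<P> \<subseteq> U" "pairwise disjnt \<P>"
  shows "card (all_edges U - cluster_edges \<P>) = (card U choose 2) - (\<Sum>P\<in>\<P>. card P choose 2)"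
proof -
  have "finite \<P>" "\<forall>P\<in>\<P>. finite P"
    using assms(1,2) by (auto intro: finite_subset[of _ "Pow U"] finite_subset[of _ U])
  moreover have "cluster_edges \<P> \<subseteq> all_edges U"
    using assms(2) unfolding cluster_edges_def all_edges_def by blast
  ultimately show ?thesis
    using assms by (simp add: card_Diff_subset finite_subset[OF _ finite_all_edges]
        card_all_edges card_cluster_edges)
qed

definition clique_and_matching :: "nat \<Rightarrow> nat \<Rightarrow> nat set set" where
  "clique_and_matching t p = insert {0..<t} ((\<lambda>i. {t + i, t + p + i}) ` {0..<p})"

lemma Union_clique_and_matching: "\<Union>(clique_and_matching t p) \<subseteq> {0..<t + 2 * p}"
  unfolding clique_and_matching_def by auto

lemma pairwise_disjnt_clique_and_matching: "pairwise disjnt (clique_and_matching t p)"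
  unfolding clique_and_matching_def pairwise_def disjnt_def by auto

lemma sum_clique_and_matching:
  "(\<Sum>P\<in>clique_and_matching t p. card P choose 2) = (t choose 2) + p"
proof -
  have "inj_on (\<lambda>i. {t + i, t + p + i}) {0..<p}"
    by (auto simp: inj_on_def doubleton_eq_iff)
  moreover have "{0..<t} \<notin> (\<lambda>i. {t + i, t + p + i}) ` {0..<p}"
    by auto
  ultimately show ?thesis
    unfolding clique_and_matching_def by (simp add: sum.reindex numeral_2_eq_2)
qed

theorem mainTheorem3:
  fixes n m :: nat
  assumes "n \<ge> 1" and "m \<le> n choose 2"
  shows "\<exists>(V :: nat set) (E :: nat set set).
           simple_graph V E \<and> card V = n \<and> card E = m \<and> paw_free V E"
proof -
  obtain k t p where "k \<le> n" "t + 2 * p \<le> k" "m = (k choose 2) - ((t choose 2) + p)"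
    using edge_count_decomposition assms(2) by blast
  moreover define E where "E = all_edges {0..<k} - cluster_edges (clique_and_matching t p)"
  moreover have "\<Union>(clique_and_matching t p) \<subseteq> {0..<k}"
    using Union_clique_and_matching \<open>t + 2 * p \<le> k\<close> by fastforce
  ultimately have "simple_graph {0..<n} E" "card E = m" "paw_free {0..<n} E"
    by (simp_all add: simple_graph_all_edges_diff card_complement_cluster
        pairwise_disjnt_clique_and_matching sum_clique_and_matching paw_free_complement_cluster)
  then show ?thesis
    by (intro exI[of _ "{0..<n}"] exI[of _ E]) simp
qed

end
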